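(* Let $N\ge 3$ and let $m:\mathbb R^{2N}\to\mathbb R$ be measurable and satisfy $$m(X-tV,V)=m(X,V)\quad\text{for all }X\in\mathcal Q^\circ,\ V\in F_X,\ t\in\mathbb R.$$ Then there is a measurable $m_0:\mathbb R\times\mathbb R^N\to\mathbb R$ such that $$m(X,V)=m_0\big(X\cdot(\mathsf E(V)\mathbf 1-\mathsf P(V)V),\,V\big)\quad\text{for all }X\in\mathcal Q^\circ,\ V\in F_X.$$
   Context: Fix an integer $N\ge 3$ and write $\mathbf 1=(1,\dots,1)\in\mathbb R^N$. Let $\mathcal Q^\circ=\{X=(x_1,\dots,x_N)\in\mathbb R^N: x_1<x_2<\dots<x_N\}$ and $\Delta=\{(u_1,u_2)\in\mathbb R^2:u_1=u_2\}$. For $X\in\mathcal Q^\circ$ and $U=(u_1,u_2)\in\mathbb R^2$ define $\psi(X,U)\in\mathbb R^N$ by $\psi_1=u_1$, $\psi_2=u_2$ and $\psi_i=\frac{(x_i-x_2)u_1-(x_i-x_1)u_2}{x_1-x_2}$ for $3\le i\le N$, and let $F_X=\{\psi(X,U):U\in\mathbb R^2\setminus\Delta\}$ (equivalently, the set of $V\in\mathbb R^N\setminus\mathbb R\mathbf 1$ such that $X+sV\in\mathbb R\mathbf 1$ for some $s\in\mathbb R$). Momentum and energy maps: $\mathsf P(V)=\sum_{i=1}^N v_i$, $\mathsf E(V)=|V|^2$. *)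

theory Defs
  imports "HOL-Analysis.Analysis"
begin

text \<open>Coordinates of R^N are indexed by a finite, well-ordered type 'n with CARD('n) = N;
  the order on 'n plays the role of the order 1 < 2 < ... < N of indices.\<close>

definition idx1 :: "'n::{finite,wellorder}" where
  "idx1 = (LEAST i. True)"

definition idx2 :: "'n::{finite,wellorder}" where
  "idx2 = (LEAST i. i \<noteq> idx1)"

definition Qcirc :: "(real^'n::{finite,wellorder}) set" where
  "Qcirc = {X. \<forall>i j. i < j \<longrightarrow> X$i < X$j}"

definition psi :: "real^('n::{finite,wellorder}) \<Rightarrow> real \<times> real \<Rightarrow> real^('n::{finite,wellorder})" where
  "psi X U = (\<chi> i. if i = idx1 then fst U else if i = idx2 then snd U
     else ((X$i - X$idx2) * fst U - (X$i - X$idx1) * snd U) / (X$idx1 - X$idx2))"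

definition FX :: "real^('n::{finite,wellorder}) \<Rightarrow> (real^('n::{finite,wellorder})) set" where
  "FX X = {psi X U | U. fst U \<noteq> snd U}"

definition momentum :: "real^'n::finite \<Rightarrow> real" where
  "momentum V = (\<Sum>i\<in>UNIV. V$i)"

definition energy :: "real^'n::finite \<Rightarrow> real" where
  "energy V = (norm V)^2"

definition one_vec :: "real^'n::finite" where
  "one_vec = (\<chi> i. 1)"

end

theory Submission imports Defs begin

text \<open>If \<open>V \<in> F_X\<close> then \<open>V = a X + b \<one>\<close> with \<open>a \<noteq> 0\<close>, so the line \<open>X + \<real> V\<close> lies in the plane
  spanned by \<open>V\<close> and \<open>\<one>\<close> and has the form \<open>{s V + \<beta> \<one>}\<close>. Along the line only \<open>\<beta>\<close> is
  invariant, and it is recovered from the pairing \<open>X \<bullet> (E(V) \<one> - P(V) V) = \<beta> (N E(V) - P(V)\<^sup>2)\<close>,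
  whose factor is positive for non-constant \<open>V\<close> by Lagrange's identity. Hence \<open>m\<close> factors through
  that pairing: evaluate it at the point of the line whose \<open>V\<close>-coefficient is the (arbitrary but
  measurable) normalisation \<open>1 / (v\<^sub>2 - v\<^sub>1)\<close>.\<close>

definition dispersion :: "real^'n::finite \<Rightarrow> real" where
  "dispersion V = real CARD('n) * energy V - (momentum V)^2"

definition canonical_point :: "real \<times> (real^('n::{finite,wellorder})) \<Rightarrow> real^('n::{finite,wellorder})" where
  "canonical_point p = (1 / (snd p $ idx2 - snd p $ idx1)) *\<^sub>R snd p
     + (fst p / dispersion (snd p)) *\<^sub>R one_vec"

lemma idx1_less_idx2:
  assumes "CARD('n::{finite,wellorder}) \<ge> 2"
  shows "(idx1::'n) < idx2"
proof -
  have "\<exists>i::'n. i \<noteq> idx1"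
  proof (rule ccontr)
    assume "\<not> ?thesis"
    then have "(UNIV::'n set) = {idx1}" by auto
    then have "CARD('n) = card {idx1::'n}" by (simp only:)
    with assms show False by simp
  qed
  then have "idx2 \<noteq> (idx1::'n)" unfolding idx2_def by (rule LeastI_ex)
  moreover have "(idx1::'n) \<le> idx2" unfolding idx1_def by (simp add: Least_le)
  ultimately show ?thesis by simp
qed

lemma psi_eq_affine:
  fixes X :: "real^('n::{finite,wellorder})"
  assumes "X $ idx1 \<noteq> X $ idx2"
  shows "psi X U = ((fst U - snd U) / (X$idx1 - X$idx2)) *\<^sub>R X
     + ((X$idx1 * snd U - X$idx2 * fst U) / (X$idx1 - X$idx2)) *\<^sub>R one_vec"
proof -
  have d: "X$idx1 - X$idx2 \<noteq> 0" using assms by simp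
  show ?thesis
    unfolding vec_eq_iff
  proof
    fix i
    have "psi X U $ i = ((fst U - snd U) * X$i + (X$idx1 * snd U - X$idx2 * fst U)) / (X$idx1 - X$idx2)"
      using d by (auto simp: psi_def field_simps)
    then show "psi X U $ i = (((fst U - snd U) / (X$idx1 - X$idx2)) *\<^sub>R X
     + ((X$idx1 * snd U - X$idx2 * fst U) / (X$idx1 - X$idx2)) *\<^sub>R one_vec) $ i"
      by (simp add: one_vec_def add_divide_distrib)
  qed
qed

lemma lagrange_identity_dispersion:
  fixes V :: "real^'n::finite"
  shows "(\<Sum>k\<in>UNIV. \<Sum>l\<in>UNIV. (V$k - V$l)^2) = 2 * dispersion V"
proof -
  have E: "energy V = (\<Sum>k\<in>UNIV. (V$k)^2)"
    unfolding energy_def power2_norm_eq_inner inner_vec_def by (simp add: power2_eq_square)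
  have "(\<Sum>k\<in>UNIV. \<Sum>l\<in>UNIV. (V$k - V$l)^2)
      = (\<Sum>k\<in>UNIV. \<Sum>l\<in>UNIV. (V$k)^2 + (V$l)^2 - 2 * V$k * V$l)"
    by (simp add: power2_diff algebra_simps)
  also have "\<dots> = 2 * (real CARD('n) * (\<Sum>k\<in>UNIV. (V$k)^2) - (\<Sum>k\<in>UNIV. V$k)^2)"
    by (simp add: sum.distrib sum_subtractf sum_distrib_left sum_distrib_right
        power2_eq_square algebra_simps)
  finally show ?thesis by (simp add: dispersion_def E momentum_def)
qed

lemma dispersion_pos:
  fixes V :: "real^'n::finite"
  assumes "V $ i \<noteq> V $ j"
  shows "dispersion V > 0"
proof -
  have "0 < (V$i - V$j)^2" using assms by simp
  also have "\<dots> \<le> (\<Sum>l\<in>UNIV. (V$i - V$l)^2)"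
    by (rule member_le_sum) auto
  also have "\<dots> \<le> (\<Sum>k\<in>UNIV. \<Sum>l\<in>UNIV. (V$k - V$l)^2)"
    by (rule member_le_sum[where f="\<lambda>k. \<Sum>l\<in>UNIV. (V$k - V$l)^2"]) (auto intro: sum_nonneg)
  finally show ?thesis by (simp add: lagrange_identity_dispersion)
qed

lemma inner_energy_momentum_affine:
  fixes V :: "real^'n::finite"
  shows "(\<alpha> *\<^sub>R V + \<beta> *\<^sub>R one_vec) \<bullet> (energy V *\<^sub>R one_vec - momentum V *\<^sub>R V)
    = \<beta> * dispersion V"
proof -
  have vv: "V \<bullet> V = energy V" by (simp add: energy_def power2_norm_eq_inner)
  have v1: "V \<bullet> one_vec = momentum V" "one_vec \<bullet> V = momentum V"
    by (simp_all add: inner_vec_def one_vec_def momentum_def)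
  have oo: "one_vec \<bullet> (one_vec::real^'n) = real CARD('n)" by (simp add: inner_vec_def one_vec_def)
  show ?thesis
    by (simp add: inner_add_left inner_diff_right vv v1 oo dispersion_def
        algebra_simps power2_eq_square)
qed

lemma canonical_point_on_line:
  fixes V :: "real^'n::{finite,wellorder}"
  assumes "V $ idx1 \<noteq> V $ idx2" and "X = \<alpha> *\<^sub>R V + \<beta> *\<^sub>R one_vec"
  shows "canonical_point (X \<bullet> (energy V *\<^sub>R one_vec - momentum V *\<^sub>R V), V)
           = X - (\<alpha> - 1 / (V $ idx2 - V $ idx1)) *\<^sub>R V"
proof -
  have "dispersion V \<noteq> 0" using dispersion_pos[OF assms(1)] by simp
  then have "X \<bullet> (energy V *\<^sub>R one_vec - momentum V *\<^sub>R V) / dispersion V = \<beta>"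
    by (simp add: assms(2) inner_energy_momentum_affine)
  then show ?thesis
    by (simp add: canonical_point_def assms(2) algebra_simps)
qed

lemma FX_on_line:
  fixes X V :: "real^('n::{finite,wellorder})"
  assumes "CARD('n) \<ge> 2" and "X \<in> Qcirc" and "V \<in> FX X"
  shows "V $ idx1 \<noteq> V $ idx2 \<and> (\<exists>\<alpha> \<beta>. X = \<alpha> *\<^sub>R V + \<beta> *\<^sub>R one_vec)"
proof -
  obtain U where U: "fst U \<noteq> snd U" "V = psi X U" using assms(3) unfolding FX_def by blast
  have x12: "X$idx1 < X$idx2"
    using assms(2) idx1_less_idx2[OF assms(1)] unfolding Qcirc_def by simp
  define a where "a = (fst U - snd U) / (X$idx1 - X$idx2)"
  define b where "b = (X$idx1 * snd U - X$idx2 * fst U) / (X$idx1 - X$idx2)"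
  have "a \<noteq> 0" using U(1) x12 by (simp add: a_def)
  have V: "V = a *\<^sub>R X + b *\<^sub>R one_vec"
    using U(2) psi_eq_affine[of X U] x12 by (simp add: a_def b_def)
  have "X = (1 / a) *\<^sub>R V + (- b / a) *\<^sub>R one_vec"
    using \<open>a \<noteq> 0\<close> by (simp add: V algebra_simps divide_inverse)
  moreover have "V$idx2 - V$idx1 = a * (X$idx2 - X$idx1)"
    using V by (simp add: one_vec_def algebra_simps)
  then have "V $ idx1 \<noteq> V $ idx2" using \<open>a \<noteq> 0\<close> x12 by auto
  ultimately show ?thesis by blast
qed

lemma energy_borel_measurable [measurable]:
  "energy \<in> borel_measurable (borel :: (real^'n::finite) measure)"
  unfolding energy_def[abs_def] by (intro borel_measurable_continuous_onI continuous_intros)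

lemma momentum_borel_measurable [measurable]:
  "momentum \<in> borel_measurable (borel :: (real^'n::finite) measure)"
  unfolding momentum_def[abs_def] by (intro borel_measurable_continuous_onI continuous_intros)

lemma canonical_point_measurable:
  "(\<lambda>p::real \<times> (real^('n::{finite,wellorder})). (canonical_point p, snd p)) \<in> borel_measurable borel"
proof -
  have [measurable]: "\<And>i. (\<lambda>V::real^('n::{finite,wellorder}). V $ i) \<in> borel_measurable borel"
    by (intro borel_measurable_continuous_onI continuous_intros)
  have "(\<lambda>p::real \<times> (real^('n::{finite,wellorder})). (canonical_point p, snd p)) \<in> borel \<Otimes>\<^sub>M borel \<rightarrow>\<^sub>M borel \<Otimes>\<^sub>M borel"
    unfolding canonical_point_def dispersion_def by measurable
  then show ?thesis by (simp add: borel_prod)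
qed

theorem proposition3p6:
  fixes m :: "(real^('n::{finite,wellorder})) \<times> (real^('n::{finite,wellorder})) \<Rightarrow> real"
  assumes "CARD('n) \<ge> 3"
    and "m \<in> borel_measurable borel"
    and "\<forall>X\<in>Qcirc. \<forall>V\<in>FX X. \<forall>t::real. m (X - t *\<^sub>R V, V) = m (X, V)"
  shows "\<exists>m0 :: real \<times> (real^('n::{finite,wellorder})) \<Rightarrow> real. m0 \<in> borel_measurable borel \<and>
           (\<forall>X\<in>Qcirc. \<forall>V\<in>FX X.
              m (X, V) = m0 (X \<bullet> (energy V *\<^sub>R one_vec - momentum V *\<^sub>R V), V))"
proof -
  let ?m0 = "\<lambda>p. m (canonical_point p, snd p)"
  have "?m0 \<in> borel_measurable borel"
    using measurable_compose[OF canonical_point_measurable assms(2)] by (simp add: o_def)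
  moreover have "m (X, V) = ?m0 (X \<bullet> (energy V *\<^sub>R one_vec - momentum V *\<^sub>R V), V)"
    if X: "X \<in> Qcirc" and V: "V \<in> FX X" for X V :: "real^('n::{finite,wellorder})"
  proof -
    obtain \<alpha> \<beta> where "V $ idx1 \<noteq> V $ idx2" "X = \<alpha> *\<^sub>R V + \<beta> *\<^sub>R one_vec"
      using FX_on_line[OF _ X V] assms(1) by auto
    then show ?thesis using assms(3) X V by (simp add: canonical_point_on_line)
  qed
  ultimately show ?thesis by blast
qed

end
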